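(* Assume the standing setup and let $I\subseteq[k]$ be such that $\{\alpha_l\mid l\in I\}$ is a basis of $V_1$ (so that $\{\beta_l\mid l\in I\}$ is a basis of $V_2$). Let $h\in[k]\setminus I$ and $j\in I$, and write $\alpha_h=\sum_{l\in I}a_l\alpha_l$, $\beta_h=\sum_{l\in I}b_l\beta_l$ with $a_l,b_l\in\mathbb{F}$. If $a_j\neq0$, then for any distinct $i_2,\dots,i_d\in I\setminus\{j\}$, we have $$\zeta_{j,i_2,\dots,i_d}\,a_j=\zeta_{h,i_2,\dots,i_d}\,b_j,$$ where $\zeta_{l_1,\dots,l_d}$ denotes the nonzero scalar with $\psi(\alpha_{l_1}\wedge\cdots\wedge\alpha_{l_d})=\zeta_{l_1,\dots,l_d}\,\beta_{l_1}\wedge\cdots\wedge\beta_{l_d}$ (which exists for both index tuples $(j,i_2,\dots,i_d)$ and $(h,i_2,\dots,i_d)$).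
   Context: Standing setup: $\mathbb{F}$ is a field of characteristic $0$; $W$ is a group with finite generating set $S=\{s_1,\dots,s_k\}$. A linear map on a finite-dimensional space is a (generalized) reflection if it is diagonalizable and $s-\operatorname{Id}$ has rank $1$; a reflection vector is a nonzero vector in $\operatorname{Im}(s-\operatorname{Id})$. $(V_1,\rho_1)$, $(V_2,\rho_2)$ are irreducible reflection representations of $(W,S)$ (each $s_i$ acts by a reflection), both of dimension $n$. For each $i\in[k]$, $\alpha_i\in V_1$ is a chosen reflection vector of $s_i$ and $\beta_i\in V_2$ a chosen reflection vector of $s_i$. $d$ is an integer with $1\le d\le n-1$, and $\psi:\bigwedge^dV_1\to\bigwedge^dV_2$ is an isomorphism of $W$-modules ($W$ acting diagonally). Whenever $\alpha_{l_1},\dots,\alpha_{l_d}$ are linearly independent, so are $\beta_{l_1},\dots,\beta_{l_d}$, and $\psi$ maps $\alpha_{l_1}\wedge\cdots\wedge\alpha_{l_d}$ to a nonzero multiple of $\beta_{l_1}\wedge\cdots\wedge\beta_{l_d}$. *)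

theory Defs
  imports "HOL-Analysis.Analysis" "HOL-Algebra.Generated_Groups"
begin

definition diagonal_mat :: "'a::zero ^'n^'n \<Rightarrow> bool" where
  "diagonal_mat D \<longleftrightarrow> (\<forall>i j. i \<noteq> j \<longrightarrow> D $ i $ j = 0)"

definition diagonalizable_mat :: "'a::field ^'n^'n \<Rightarrow> bool" where
  "diagonalizable_mat A \<longleftrightarrow> (\<exists>(P::'a^'n^'n) (D::'a^'n^'n). invertible P \<and> diagonal_mat D \<and> A ** P = P ** D)"

definition is_reflection :: "'a::field ^'n^'n \<Rightarrow> bool" where
  "is_reflection A \<longleftrightarrow> diagonalizable_mat A \<and> rank (A - mat 1) = 1"

definition reflection_vector :: "'a::field ^'n^'n \<Rightarrow> 'a^'n \<Rightarrow> bool" where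
  "reflection_vector A v \<longleftrightarrow> v \<noteq> 0 \<and> v \<in> range (\<lambda>u. (A - mat 1) *v u)"

definition is_rep :: "('w, 'b) monoid_scheme \<Rightarrow> ('w \<Rightarrow> 'a::field ^'n^'n) \<Rightarrow> bool" where
  "is_rep W \<rho> \<longleftrightarrow> \<rho> \<one>\<^bsub>W\<^esub> = mat 1 \<and>
     (\<forall>g\<in>carrier W. \<forall>h\<in>carrier W. \<rho> (g \<otimes>\<^bsub>W\<^esub> h) = \<rho> g ** \<rho> h)"

text \<open>Irreducible: the only W-invariant subspaces are 0 and the whole space
  (the space F^n is nonzero since types are nonempty).\<close>
definition irreducible_rep :: "('w, 'b) monoid_scheme \<Rightarrow> ('w \<Rightarrow> 'a::field ^'n^'n) \<Rightarrow> bool" where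
  "irreducible_rep W \<rho> \<longleftrightarrow>
     (\<forall>U. vec.subspace U \<and> (\<forall>g\<in>carrier W. \<forall>u\<in>U. \<rho> g *v u \<in> U) \<longrightarrow> U = {0} \<or> U = UNIV)"

definition reflection_rep ::
  "('w, 'b) monoid_scheme \<Rightarrow> (nat \<Rightarrow> 'w) \<Rightarrow> nat \<Rightarrow> ('w \<Rightarrow> 'a::field ^'n^'n) \<Rightarrow> bool" where
  "reflection_rep W s k \<rho> \<longleftrightarrow> is_rep W \<rho> \<and> (\<forall>i\<in>{1..k}. is_reflection (\<rho> (s i)))"

definition lin_indep_fam :: "nat \<Rightarrow> (nat \<Rightarrow> 'a::field ^'n) \<Rightarrow> bool" where
  "lin_indep_fam d v \<longleftrightarrow> (\<forall>c. (\<Sum>i<d. c i *s v i) = 0 \<longrightarrow> (\<forall>i<d. c i = 0))"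

text \<open>We realise \<And>^d (F^n) inside the d-fold tensor power,
  whose elements are coordinate functions on index lists of length d
  (coordinates at lists of other lengths are 0).\<close>
definition wedge :: "nat \<Rightarrow> (nat \<Rightarrow> 'a::field ^'n::finite) \<Rightarrow> ('n list \<Rightarrow> 'a)" where
  "wedge d v = (\<lambda>xs. if length xs = d then
      (\<Sum>p | p permutes {..<d}. of_int (sign p) * (\<Prod>i<d. v (p i) $ (xs ! i))) else 0)"

definition ext_pow :: "nat \<Rightarrow> ('n::finite list \<Rightarrow> 'a::field) set" where
  "ext_pow d = {x. \<exists>m (c :: nat \<Rightarrow> 'a) (vs :: nat \<Rightarrow> nat \<Rightarrow> 'a ^'n).
      x = (\<lambda>xs. \<Sum>r<m. c r * wedge d (vs r) xs)}"

text \<open>Diagonal action of a matrix on the d-fold tensor power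
  (restricting to the exterior power, it maps v_1\<and>...\<and>v_d to A v_1 \<and> ... \<and> A v_d).\<close>
definition tensor_act :: "nat \<Rightarrow> 'a::field ^'n::finite^'n \<Rightarrow> ('n list \<Rightarrow> 'a) \<Rightarrow> ('n list \<Rightarrow> 'a)" where
  "tensor_act d A x = (\<lambda>ys. if length ys = d then
      (\<Sum>xs\<in>{xs. length xs = d}. (\<Prod>i<d. A $ (ys ! i) $ (xs ! i)) * x xs) else 0)"

definition ext_iso ::
  "('w, 'b) monoid_scheme \<Rightarrow> nat \<Rightarrow> ('w \<Rightarrow> 'a::field ^'n^'n) \<Rightarrow> ('w \<Rightarrow> 'a ^'n^'n)
     \<Rightarrow> (('n list \<Rightarrow> 'a) \<Rightarrow> ('n list \<Rightarrow> 'a)) \<Rightarrow> bool" where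
  "ext_iso W d \<rho>1 \<rho>2 \<psi> \<longleftrightarrow>
     bij_betw \<psi> (ext_pow d) (ext_pow d) \<and>
     (\<forall>x\<in>ext_pow d. \<forall>y\<in>ext_pow d. \<psi> (\<lambda>xs. x xs + y xs) = (\<lambda>xs. \<psi> x xs + \<psi> y xs)) \<and>
     (\<forall>c. \<forall>x\<in>ext_pow d. \<psi> (\<lambda>xs. c * x xs) = (\<lambda>xs. c * \<psi> x xs)) \<and>
     (\<forall>g\<in>carrier W. \<forall>x\<in>ext_pow d.
        \<psi> (tensor_act d (\<rho>1 g) x) = tensor_act d (\<rho>2 g) (\<psi> x))"

end

theory Submission
  imports Defs
begin

text \<open>Write \<open>w\<^sub>l\<close> for \<open>\<alpha>\<^sub>l \<and> \<alpha>\<^sub>i\<^sub>2 \<and> \<dots> \<and> \<alpha>\<^sub>i\<^sub>d\<close> and \<open>w'\<^sub>l\<close> for its \<open>\<beta>\<close>-analogue, and let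
  \<open>L = I - {i\<^sub>2, \<dots>, i\<^sub>d}\<close>. The wedge is linear in its first slot and vanishes on repeated
  entries, so expanding \<open>\<alpha>\<^sub>h\<close> and \<open>\<beta>\<^sub>h\<close> in the bases gives
  \<open>\<psi> w\<^sub>h = \<Sum>\<^sub>l\<^sub>\<in>\<^sub>L a\<^sub>l \<zeta>\<^sub>l w'\<^sub>l\<close> and \<open>\<zeta>\<^sub>h w'\<^sub>h = \<Sum>\<^sub>l\<^sub>\<in>\<^sub>L \<zeta>\<^sub>h b\<^sub>l w'\<^sub>l\<close>. Pairing a tensor with the covectors
  dual to \<open>\<beta>\<^sub>j, \<beta>\<^sub>i\<^sub>2, \<dots>, \<beta>\<^sub>i\<^sub>d\<close> reads off the coefficient of \<open>w'\<^sub>j\<close> (a Leibniz determinant of a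
  Kronecker matrix), so the \<open>w'\<^sub>l\<close> are independent and the coefficients at \<open>j\<close> agree.
  That the \<open>\<beta>\<^sub>l\<close> (\<open>l \<in> I\<close>) form an independent family is not assumed; it follows from the
  same coefficient comparison on the \<open>\<alpha>\<close>-side, because a relation \<open>\<Sum> c\<^sub>l \<beta>\<^sub>l = 0\<close> makes the
  injective map \<open>\<psi>\<close> send \<open>\<Sum>\<^sub>l\<^sub>\<in>\<^sub>L (c\<^sub>l / \<zeta>\<^sub>l) w\<^sub>l\<close> to \<open>0\<close>.\<close>

definition fam_indep :: "nat set \<Rightarrow> (nat \<Rightarrow> 'a::field^'n) \<Rightarrow> bool" where
  "fam_indep I v \<longleftrightarrow> (\<forall>c. (\<Sum>l\<in>I. c l *s v l) = 0 \<longrightarrow> (\<forall>l\<in>I. c l = 0))"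

lemma fam_indep_iff:
  assumes "finite I"
  shows "fam_indep I v \<longleftrightarrow> inj_on v I \<and> vec.independent (v ` I)"
proof
  assume ind: "fam_indep I v"
  show "inj_on v I \<and> vec.independent (v ` I)"
  proof
    show inj: "inj_on v I"
    proof (rule inj_onI, rule ccontr)
      fix x y assume xy: "x \<in> I" "y \<in> I" "v x = v y" "x \<noteq> y"
      define c :: "nat \<Rightarrow> 'a" where "c l = (if l = x then 1 else if l = y then -1 else 0)" for l
      have "(\<Sum>l\<in>I. c l *s v l) = (\<Sum>l\<in>{x, y}. c l *s v l)"
        by (rule sum.mono_neutral_right) (use assms xy in \<open>auto simp: c_def\<close>)
      also have "\<dots> = 0" using xy by (simp add: c_def)
      finally have "c x = 0" using ind xy unfolding fam_indep_def by blast
      then show False by (simp add: c_def)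
    qed
    show "vec.independent (v ` I)" unfolding vec.independent_explicit
    proof (intro conjI allI impI ballI)
      show "finite (v ` I)" using assms by simp
      fix c w assume "(\<Sum>w\<in>v ` I. c w *s w) = 0" and w: "w \<in> v ` I"
      then have "(\<Sum>l\<in>I. (c \<circ> v) l *s v l) = 0" by (simp add: sum.reindex[OF inj])
      then show "c w = 0" using ind w unfolding fam_indep_def by auto
    qed
  qed
next
  assume "inj_on v I \<and> vec.independent (v ` I)"
  then have inj: "inj_on v I" and ind: "vec.independent (v ` I)" by blast+
  show "fam_indep I v" unfolding fam_indep_def
  proof (intro allI impI ballI)
    fix c l assume rel: "(\<Sum>l\<in>I. c l *s v l) = 0" and l: "l \<in> I"
    define c' where "c' w = c (the_inv_into I v w)" for w
    have "(\<Sum>w\<in>v ` I. c' w *s w) = (\<Sum>l\<in>I. c l *s v l)"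
      by (simp add: sum.reindex[OF inj] c'_def the_inv_into_f_f[OF inj])
    then have "c' (v l) = 0" using ind rel l unfolding vec.independent_explicit by auto
    then show "c l = 0" by (simp add: c'_def the_inv_into_f_f[OF inj l])
  qed
qed

lemma lin_indep_fam_comp:
  assumes ind: "fam_indep I v" and "finite I" and inj: "inj_on l {..<d}" and "l ` {..<d} \<subseteq> I"
  shows "lin_indep_fam d (v \<circ> l)"
  unfolding lin_indep_fam_def
proof (intro allI impI)
  fix c i assume rel: "(\<Sum>i<d. c i *s (v \<circ> l) i) = 0" and i: "i < d"
  define c' where "c' y = (if y \<in> l ` {..<d} then c (the_inv_into {..<d} l y) else 0)" for y
  have "(\<Sum>y\<in>I. c' y *s v y) = (\<Sum>y\<in>l ` {..<d}. c' y *s v y)"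
    by (rule sum.mono_neutral_right) (use assms in \<open>auto simp: c'_def\<close>)
  also have "\<dots> = (\<Sum>i<d. c i *s (v \<circ> l) i)"
    by (simp add: sum.reindex[OF inj] c'_def the_inv_into_f_f[OF inj])
  finally have "c' (l i) = 0" using ind rel i assms(4) unfolding fam_indep_def by auto
  then show "c i = 0" using i by (simp add: c'_def the_inv_into_f_f[OF inj])
qed

definition dot :: "'a::field^'n \<Rightarrow> 'a^'n \<Rightarrow> 'a" where
  "dot g v = (\<Sum>x\<in>UNIV. g $ x * v $ x)"

lemma dual_family_exists:
  fixes v :: "nat \<Rightarrow> 'a::field^'n"
  assumes "fam_indep I v" "finite I"
  shows "\<exists>g. \<forall>a\<in>I. \<forall>b\<in>I. dot (g a) (v b) = (if b = a then 1 else 0)"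
proof -
  have inj: "inj_on v I" and ind: "vec.independent (v ` I)"
    using assms fam_indep_iff by blast+
  obtain B where B: "v ` I \<subseteq> B" "vec.independent B" "UNIV \<subseteq> vec.span B"
    by (rule vec.maximal_independent_subset_extend[OF subset_UNIV ind])
  have span: "x \<in> vec.span B" for x using B(3) by blast
  define g where "g a = (\<chi> x. vec.representation B (axis x 1) (v a))" for a
  have dot_g: "dot (g a) u = vec.representation B u (v a)" for a u
  proof -
    have "vec.representation B u = vec.representation B (\<Sum>x\<in>UNIV. u $ x *s axis x 1)"
      by (simp only: basis_expansion)
    also have "\<dots> = (\<lambda>b. \<Sum>x\<in>UNIV. u $ x * vec.representation B (axis x 1) b)"
      by (simp add: vec.representation_sum[OF B(2) span] vec.representation_scale[OF B(2) span])
    finally show ?thesis by (simp add: dot_def g_def mult.commute)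
  qed
  have "dot (g a) (v b) = (if b = a then 1 else 0)" if "a \<in> I" "b \<in> I" for a b
  proof -
    have "vec.representation B (v b) = (\<lambda>w. if w = v b then 1 else 0)"
      using B(1) that by (intro vec.representation_basis[OF B(2)]) auto
    then show ?thesis using inj that by (auto simp: dot_g inj_on_def)
  qed
  then show ?thesis by blast
qed

lemma sum_lists_prod:
  fixes f :: "nat \<Rightarrow> 'n::finite \<Rightarrow> 'a::comm_semiring_1"
  shows "(\<Sum>xs | length xs = d. \<Prod>i<d. f i (xs ! i)) = (\<Prod>i<d. \<Sum>x\<in>UNIV. f i x)"
proof (induction d arbitrary: f)
  case 0
  have "{xs::'n list. length xs = 0} = {[]}" by auto
  then show ?case by simp
next
  case (Suc d)
  have lists: "{xs::'n list. length xs = Suc d} = (\<lambda>(x, ys). x # ys) ` (UNIV \<times> {ys. length ys = d})"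
    by (auto simp: length_Suc_conv image_iff)
  have inj: "inj_on (\<lambda>(x::'n, ys). x # ys) (UNIV \<times> {ys. length ys = d})"
    by (auto simp: inj_on_def)
  have "(\<Sum>xs | length xs = Suc d. \<Prod>i<Suc d. f i (xs ! i))
      = (\<Sum>x\<in>UNIV. \<Sum>ys | length ys = d. f 0 x * (\<Prod>i<d. f (Suc i) (ys ! i)))"
  proof -
    have "(\<Sum>xs | length xs = Suc d. \<Prod>i<Suc d. f i (xs ! i))
        = (\<Sum>(x, ys)\<in>UNIV \<times> {ys. length ys = d}. \<Prod>i<Suc d. f i ((x # ys) ! i))"
      unfolding lists sum.reindex[OF inj] by (simp add: comp_def case_prod_beta)
    then show ?thesis
      by (simp add: sum.cartesian_product[symmetric] prod.lessThan_Suc_shift del: prod.lessThan_Suc)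
  qed
  also have "\<dots> = (\<Prod>i<Suc d. \<Sum>x\<in>UNIV. f i x)"
    using Suc[of "\<lambda>i. f (Suc i)"]
    by (simp add: sum_distrib_left[symmetric] sum_distrib_right prod.lessThan_Suc_shift
        del: prod.lessThan_Suc)
  finally show ?case .
qed

definition tensor_pairing :: "nat \<Rightarrow> (nat \<Rightarrow> 'a::field^'n::finite) \<Rightarrow> ('n list \<Rightarrow> 'a) \<Rightarrow> 'a" where
  "tensor_pairing d G T = (\<Sum>xs | length xs = d. (\<Prod>i<d. G i $ (xs ! i)) * T xs)"

definition det_leibniz :: "nat \<Rightarrow> (nat \<Rightarrow> nat \<Rightarrow> 'a::comm_ring_1) \<Rightarrow> 'a" where
  "det_leibniz d M = (\<Sum>p | p permutes {..<d}. of_int (sign p) * (\<Prod>i<d. M i (p i)))"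

lemma tensor_pairing_sum:
  "tensor_pairing d G (\<lambda>xs. \<Sum>l\<in>F. c l * T l xs) = (\<Sum>l\<in>F. c l * tensor_pairing d G (T l))"
  unfolding tensor_pairing_def
  by (simp add: sum_distrib_left sum_distrib_right mult_ac sum.swap[of _ F])

lemma tensor_pairing_wedge:
  "tensor_pairing d G (wedge d v) = det_leibniz d (\<lambda>i m. dot (G i) (v m))"
proof -
  have "tensor_pairing d G (wedge d v) = (\<Sum>xs | length xs = d. \<Sum>p | p permutes {..<d}.
          of_int (sign p) * (\<Prod>i<d. G i $ (xs ! i) * v (p i) $ (xs ! i)))"
    unfolding tensor_pairing_def wedge_def
    by (intro sum.cong refl) (simp add: sum_distrib_left prod.distrib mult_ac)
  also have "\<dots> = (\<Sum>p | p permutes {..<d}. of_int (sign p) *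
          (\<Sum>xs | length xs = d. \<Prod>i<d. G i $ (xs ! i) * v (p i) $ (xs ! i)))"
    by (subst sum.swap) (simp add: sum_distrib_left)
  finally show ?thesis
    by (simp add: det_leibniz_def dot_def sum_lists_prod[of "\<lambda>i x. G i $ x * _ i $ x"])
qed

lemma det_leibniz_inj_kronecker:
  assumes inj: "inj_on \<sigma> {..<d}"
    and M: "\<And>i m. i < d \<Longrightarrow> m < d \<Longrightarrow> M i m = (if \<sigma> m = \<sigma> i then 1 else 0)"
  shows "det_leibniz d M = 1"
proof -
  have "of_int (sign p) * (\<Prod>i<d. M i (p i)) = (if p = id then 1 else 0)"
    if p: "p permutes {..<d}" for p
  proof (cases "p = id")
    case True
    then show ?thesis by (simp add: M sign_id)
  next
    case False
    then obtain i where i: "i < d" "p i \<noteq> i"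
      using permutes_not_in[OF p] by (metis eq_id_iff lessThan_iff)
    have "p i < d" using permutes_in_image[OF p] i(1) by simp
    then have "M i (p i) = 0" using inj i by (simp add: M inj_on_eq_iff)
    then have "(\<Prod>i<d. M i (p i)) = 0" using i(1) by (intro prod_zero) auto
    then show ?thesis using False by simp
  qed
  then have "det_leibniz d M = (\<Sum>p | p permutes {..<d}. if p = id then 1 else 0)"
    unfolding det_leibniz_def by (intro sum.cong) auto
  also have "\<dots> = 1" by (simp add: sum.delta' finite_permutations permutes_id)
  finally show ?thesis .
qed

lemma det_leibniz_zero_column:
  assumes "m < d" "\<And>i. i < d \<Longrightarrow> M i m = 0"
  shows "det_leibniz d M = 0"
  unfolding det_leibniz_def
proof (rule sum.neutral, intro ballI)
  fix p assume "p \<in> {p. p permutes {..<d}}"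
  then have p: "p permutes {..<d}" by simp
  let ?i = "Hilbert_Choice.inv p m"
  have "?i < d" "p ?i = m"
    using assms(1) permutes_in_image[OF permutes_inv[OF p]] permutes_inverses(1)[OF p] by auto
  then have "(\<Prod>i<d. M i (p i)) = 0" using assms(2) by (intro prod_zero) force+
  then show "of_int (sign p) * (\<Prod>i<d. M i (p i)) = 0" by simp
qed

lemma wedge_update_zero_sum:
  assumes "1 \<le> d"
  shows "wedge d (v(0 := \<Sum>l\<in>F. c l *s u l)) xs = (\<Sum>l\<in>F. c l * wedge d (v(0 := u l)) xs)"
proof (cases "length xs = d")
  case True
  define R where "R p = of_int (sign p) *
    (\<Prod>i\<in>{..<d} - {Hilbert_Choice.inv p 0}. v (p i) $ (xs ! i))" for p
  have slot: "of_int (sign p) * (\<Prod>i<d. (v(0 := z)) (p i) $ (xs ! i))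
      = z $ (xs ! Hilbert_Choice.inv p 0) * R p"
    if p: "p permutes {..<d}" for p z
  proof -
    let ?i = "Hilbert_Choice.inv p 0"
    have i: "?i < d" "p ?i = 0"
      using assms permutes_in_image[OF permutes_inv[OF p]] permutes_inverses(1)[OF p] by auto
    have "p i \<noteq> 0" if "i \<noteq> ?i" for i
      using that i(2) permutes_inj[OF p] by (metis injD)
    then have "(\<Prod>i\<in>{..<d} - {?i}. (v(0 := z)) (p i) $ (xs ! i))
        = (\<Prod>i\<in>{..<d} - {?i}. v (p i) $ (xs ! i))"
      by (intro prod.cong) (auto simp del: neq0_conv)
    then show ?thesis using i by (simp add: prod.remove[of _ ?i] R_def)
  qed
  have form: "wedge d (v(0 := z)) xs = (\<Sum>p | p permutes {..<d}. z $ (xs ! Hilbert_Choice.inv p 0) * R p)"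
    for z
    unfolding wedge_def using True slot by (simp del: fun_upd_apply)
  show ?thesis unfolding form
    by (simp add: sum_distrib_left sum_distrib_right mult_ac sum.swap[of _ F])
next
  case False
  then show ?thesis by (simp add: wedge_def)
qed

lemma wedge_eq_zero_if_repeated:
  fixes v :: "nat \<Rightarrow> 'a::field_char_0^'n::finite"
  assumes "i < d" "m < d" "i \<noteq> m" "v i = v m"
  shows "wedge d v = (\<lambda>xs. 0)"
proof
  fix xs :: "'n list"
  let ?P = "{p. p permutes {..<d}}"
  let ?f = "\<lambda>p. of_int (sign p) * (\<Prod>i<d. v (p i) $ (xs ! i)) :: 'a"
  define \<tau> where "\<tau> = Transposition.transpose i m"
  have \<tau>: "\<tau> permutes {..<d}" unfolding \<tau>_def using assms by (intro permutes_swap_id) auto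
  have v\<tau>: "v (\<tau> x) = v x" for x
    using assms(4) by (auto simp: \<tau>_def Transposition.transpose_def)
  have sign\<tau>: "sign (\<tau> \<circ> p) = - sign p" if "p permutes {..<d}" for p
  proof -
    have "permutation \<tau>" "permutation p"
      using \<tau> that by (auto simp: permutation_permutes)
    then show ?thesis using assms(3) by (simp add: sign_compose \<tau>_def sign_swap_id)
  qed
  have "sum ?f ?P = sum (\<lambda>p. ?f (\<tau> \<circ> p)) ?P"
    by (rule setum_permutations_compose_left[OF \<tau>])
  also have "\<dots> = sum (\<lambda>p. - ?f p) ?P"
    by (intro sum.cong) (simp_all add: v\<tau> sign\<tau>)
  finally have "sum ?f ?P = - sum ?f ?P" by (simp add: sum_negf)
  then show "wedge d v xs = 0" by (simp add: wedge_def)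
qed

lemma wedge_comp_update_sum:
  fixes w :: "nat \<Rightarrow> 'a::field_char_0^'n::finite"
  assumes "1 \<le> d" "finite I"
  shows "wedge d ((w \<circ> u)(0 := \<Sum>l\<in>I. a l *s w l))
    = (\<lambda>xs. \<Sum>l\<in>I - u ` {1..<d}. a l * wedge d (w \<circ> u(0 := l)) xs)"
proof
  fix xs
  have repeated: "wedge d (w \<circ> u(0 := l)) = (\<lambda>xs. 0)" if l: "l \<in> u ` {1..<d}" for l
  proof -
    obtain x where "x \<in> {1..<d}" "l = u x" using l by blast
    then show ?thesis by (intro wedge_eq_zero_if_repeated[of 0 d x]) auto
  qed
  show "wedge d ((w \<circ> u)(0 := \<Sum>l\<in>I. a l *s w l)) xs
      = (\<Sum>l\<in>I - u ` {1..<d}. a l * wedge d (w \<circ> u(0 := l)) xs)"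
    unfolding wedge_update_zero_sum[OF assms(1)] fun_upd_comp[symmetric]
    by (rule sum.mono_neutral_right) (use assms(2) in \<open>auto simp: repeated\<close>)
qed

lemma ext_pow_sum_wedges:
  assumes "finite F"
  shows "(\<lambda>xs. \<Sum>l\<in>F. c l * wedge d (V l) xs) \<in> ext_pow d"
proof -
  obtain e where e: "bij_betw e {..<card F} F"
    using ex_bij_betw_nat_finite[OF assms] by (auto simp: atLeast0LessThan)
  show ?thesis unfolding ext_pow_def sum.reindex_bij_betw[OF e, symmetric]
    by (intro CollectI exI[of _ "card F"] exI[of _ "\<lambda>r. c (e r)"] exI[of _ "\<lambda>r. V (e r)"]) (rule refl)
qed

lemma ext_iso_zero:
  assumes "ext_iso W d \<rho>1 \<rho>2 \<psi>"
  shows "\<psi> (\<lambda>xs. 0) = (\<lambda>xs. 0)"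
proof -
  have "\<forall>c. \<forall>x\<in>ext_pow d. \<psi> (\<lambda>xs. c * x xs) = (\<lambda>xs. c * \<psi> x xs)"
    using assms unfolding ext_iso_def by blast
  moreover have "(\<lambda>xs. 0) \<in> ext_pow d"
    using ext_pow_sum_wedges[where F = "{}" and d = d] by simp
  ultimately have "\<psi> (\<lambda>xs. 0 * (\<lambda>xs. 0) xs) = (\<lambda>xs. 0 * \<psi> (\<lambda>xs. 0) xs)"
    by (rule bspec[OF spec[of _ 0]])
  then show ?thesis by simp
qed

lemma ext_iso_sum:
  assumes iso: "ext_iso W d \<rho>1 \<rho>2 \<psi>" and "finite F"
  shows "\<psi> (\<lambda>xs. \<Sum>l\<in>F. c l * wedge d (V l) xs) = (\<lambda>xs. \<Sum>l\<in>F. c l * \<psi> (wedge d (V l)) xs)"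
  using \<open>finite F\<close>
proof (induction F rule: finite_induct)
  case empty
  then show ?case using ext_iso_zero[OF iso] by simp
next
  case (insert a F)
  have add: "\<forall>x\<in>ext_pow d. \<forall>y\<in>ext_pow d. \<psi> (\<lambda>xs. x xs + y xs) = (\<lambda>xs. \<psi> x xs + \<psi> y xs)"
    and scale: "\<forall>c. \<forall>x\<in>ext_pow d. \<psi> (\<lambda>xs. c * x xs) = (\<lambda>xs. c * \<psi> x xs)"
    using iso unfolding ext_iso_def by blast+
  have "(\<lambda>xs. c a * wedge d (V a) xs) \<in> ext_pow d"
    using ext_pow_sum_wedges[where F = "{a}" and c = c and d = d and V = V] by simp
  moreover have "wedge d (V a) \<in> ext_pow d"
    using ext_pow_sum_wedges[where F = "{a}" and c = "\<lambda>_. 1" and d = d and V = V] by simp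
  ultimately show ?case
    using insert add ext_pow_sum_wedges[OF insert.hyps(1), where c = c and d = d and V = V] scale
    by simp
qed

lemma inj_on_update_zero:
  fixes d :: nat
  assumes "inj_on u {1..<d}" "l \<notin> u ` {1..<d}"
  shows "inj_on (u(0 := l)) {..<d}"
proof -
  have "x \<in> {1..<d}" if "x < d" "x \<noteq> 0" for x using that by simp
  then show ?thesis using assms by (auto simp: inj_on_def image_iff)
qed

lemma image_update_zero_subset:
  fixes d :: nat
  assumes "u ` {1..<d} \<subseteq> I" "l \<in> I"
  shows "(u(0 := l)) ` {..<d} \<subseteq> I"
proof -
  have "x \<in> {1..<d}" if "x < d" "x \<noteq> 0" for x using that by simp
  then show ?thesis using assms by (auto simp: image_subset_iff)
qed

lemma tensor_pairing_dual_wedge: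
  fixes v :: "nat \<Rightarrow> 'a::field^'n::finite"
  assumes dual: "\<forall>a\<in>I. \<forall>b\<in>I. dot (g a) (v b) = (if b = a then 1 else 0)"
    and u: "inj_on u {1..<d}" "u ` {1..<d} \<subseteq> I"
    and j: "j \<in> I - u ` {1..<d}" and l: "l \<in> I - u ` {1..<d}" and "1 \<le> d"
  shows "tensor_pairing d (\<lambda>i. g ((u(0 := j)) i)) (wedge d (v \<circ> u(0 := l))) = (if l = j then 1 else 0)"
proof -
  have M: "dot (g ((u(0 := j)) i)) ((v \<circ> u(0 := l)) m) = (if (u(0 := l)) m = (u(0 := j)) i then 1 else 0)"
    if "i < d" "m < d" for i m
    using dual that image_update_zero_subset[OF u(2)] j l by (simp add: image_subset_iff del: fun_upd_apply)
  show ?thesis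
  proof (cases "l = j")
    case True
    have "inj_on (u(0 := j)) {..<d}" using inj_on_update_zero[OF u(1)] j by blast
    from det_leibniz_inj_kronecker[OF this M[unfolded True]]
    show ?thesis unfolding tensor_pairing_wedge True by simp
  next
    case False
    have "(u(0 := l)) 0 \<noteq> (u(0 := j)) i" if "i < d" for i
      using False l that by (cases "i = 0") auto
    then have "det_leibniz d (\<lambda>i m. dot (g ((u(0 := j)) i)) ((v \<circ> u(0 := l)) m)) = 0"
      using M \<open>1 \<le> d\<close> by (intro det_leibniz_zero_column[of 0]) (simp_all del: fun_upd_apply)
    then show ?thesis unfolding tensor_pairing_wedge using False by simp
  qed
qed

lemma wedge_update_coeff_eq:
  fixes v :: "nat \<Rightarrow> 'a::field^'n::finite"
  assumes "fam_indep I v" "finite I" "1 \<le> d"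
    and u: "inj_on u {1..<d}" "u ` {1..<d} \<subseteq> I" and j: "j \<in> I - u ` {1..<d}"
    and eq: "(\<lambda>xs. \<Sum>l\<in>I - u ` {1..<d}. c l * wedge d (v \<circ> u(0 := l)) xs)
           = (\<lambda>xs. \<Sum>l\<in>I - u ` {1..<d}. c' l * wedge d (v \<circ> u(0 := l)) xs)"
  shows "c j = c' j"
proof -
  obtain g where dual: "\<forall>a\<in>I. \<forall>b\<in>I. dot (g a) (v b) = (if b = a then 1 else 0)"
    using dual_family_exists[OF assms(1,2)] by blast
  let ?G = "\<lambda>i. g ((u(0 := j)) i)"
  have pairing: "tensor_pairing d ?G (wedge d (v \<circ> u(0 := l))) = (if l = j then 1 else 0)"
    if "l \<in> I - u ` {1..<d}" for l
    by (rule tensor_pairing_dual_wedge[OF dual u j that \<open>1 \<le> d\<close>])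
  have coeff: "tensor_pairing d ?G (\<lambda>xs. \<Sum>l\<in>I - u ` {1..<d}. e l * wedge d (v \<circ> u(0 := l)) xs)
      = e j" for e
  proof -
    have "tensor_pairing d ?G (\<lambda>xs. \<Sum>l\<in>I - u ` {1..<d}. e l * wedge d (v \<circ> u(0 := l)) xs)
        = (\<Sum>l\<in>I - u ` {1..<d}. if l = j then e l else 0)"
      unfolding tensor_pairing_sum by (intro sum.cong refl) (simp only: pairing, simp)
    then show ?thesis using j \<open>finite I\<close> by simp
  qed
  show ?thesis using coeff[of c] coeff[of c'] eq by simp
qed

lemma fam_indep_transfer:
  fixes \<alpha> \<beta> :: "nat \<Rightarrow> 'a::field_char_0^'n::finite"
  assumes iso: "ext_iso W d \<rho>1 \<rho>2 \<psi>"
    and \<alpha>: "fam_indep I \<alpha>" and "finite I" "1 \<le> d" "d < card I"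
    and scalar: "\<And>u l. inj_on u {1..<d} \<Longrightarrow> u ` {1..<d} \<subseteq> I \<Longrightarrow> l \<in> I - u ` {1..<d} \<Longrightarrow>
      \<exists>\<zeta>. \<zeta> \<noteq> 0 \<and> \<psi> (wedge d (\<alpha> \<circ> u(0 := l))) = (\<lambda>xs. \<zeta> * wedge d (\<beta> \<circ> u(0 := l)) xs)"
  shows "fam_indep I \<beta>"
  unfolding fam_indep_def
proof (intro allI impI ballI)
  fix c m assume rel: "(\<Sum>l\<in>I. c l *s \<beta> l) = 0" and m: "m \<in> I"
  have "card {1..<d} \<le> card (I - {m})"
    using \<open>finite I\<close> \<open>d < card I\<close> m by (simp add: card_Diff_singleton)
  then obtain u where u: "inj_on u {1..<d}" "u ` {1..<d} \<subseteq> I - {m}"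
    using card_le_inj[of "{1..<d}" "I - {m}"] \<open>finite I\<close> by auto
  let ?L = "I - u ` {1..<d}"
  have uI: "u ` {1..<d} \<subseteq> I" and mL: "m \<in> ?L" using u(2) m by auto
  have "\<forall>l\<in>?L. \<exists>\<zeta>. \<zeta> \<noteq> 0 \<and>
      \<psi> (wedge d (\<alpha> \<circ> u(0 := l))) = (\<lambda>xs. \<zeta> * wedge d (\<beta> \<circ> u(0 := l)) xs)"
    by (intro ballI scalar[OF u(1) uI])
  from bchoice[OF this] obtain Z where Z: "\<forall>l\<in>?L. Z l \<noteq> 0 \<and>
      \<psi> (wedge d (\<alpha> \<circ> u(0 := l))) = (\<lambda>xs. Z l * wedge d (\<beta> \<circ> u(0 := l)) xs)"
    by blast
  let ?y = "\<lambda>xs. \<Sum>l\<in>?L. (c l / Z l) * wedge d (\<alpha> \<circ> u(0 := l)) xs"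
  let ?z = "\<lambda>xs. \<Sum>l\<in>?L. 0 * wedge d (\<alpha> \<circ> u(0 := l)) xs"
  have "\<psi> ?y = (\<lambda>xs. \<Sum>l\<in>?L. (c l / Z l) * \<psi> (wedge d (\<alpha> \<circ> u(0 := l))) xs)"
    by (rule ext_iso_sum[OF iso]) (use \<open>finite I\<close> in simp)
  also have "\<dots> = (\<lambda>xs. \<Sum>l\<in>?L. c l * wedge d (\<beta> \<circ> u(0 := l)) xs)"
    using Z by (intro ext sum.cong refl) simp
  also have "\<dots> = wedge d ((\<beta> \<circ> u)(0 := 0))"
    using wedge_comp_update_sum[OF \<open>1 \<le> d\<close> \<open>finite I\<close>, where w = \<beta> and u = u and a = c] rel
    by simp
  also have "\<dots> = \<psi> ?z"
    using wedge_update_zero_sum[OF \<open>1 \<le> d\<close>, where v = "\<beta> \<circ> u" and F = "{}"] ext_iso_zero[OF iso]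
    by auto
  finally have "\<psi> ?y = \<psi> ?z" .
  moreover have "inj_on \<psi> (ext_pow d)" using iso by (simp add: ext_iso_def bij_betw_def)
  moreover have "?y \<in> ext_pow d"
    using \<open>finite I\<close> by (intro ext_pow_sum_wedges finite_Diff)
  moreover have "?z \<in> ext_pow d"
    using \<open>finite I\<close> by (intro ext_pow_sum_wedges[where c = "\<lambda>_. 0"] finite_Diff)
  ultimately have "?y = ?z" by (auto dest: inj_onD)
  then have "c m / Z m = 0"
    by (rule wedge_update_coeff_eq[OF \<alpha> \<open>finite I\<close> \<open>1 \<le> d\<close> u(1) uI mL])
  then show "c m = 0" using Z mL by simp
qed

lemma wedge_coeff_relation:
  fixes \<alpha> \<beta> :: "nat \<Rightarrow> 'a::field_char_0^'n::finite"
  assumes iso: "ext_iso W d \<rho>1 \<rho>2 \<psi>"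
    and \<beta>: "fam_indep I \<beta>" and "finite I" "1 \<le> d"
    and t: "inj_on t {1..<d}" "t ` {1..<d} \<subseteq> I" and j: "j \<in> I - t ` {1..<d}"
    and scalar: "\<forall>l\<in>I - t ` {1..<d}.
      \<exists>\<zeta>. \<psi> (wedge d (\<alpha> \<circ> t(0 := l))) = (\<lambda>xs. \<zeta> * wedge d (\<beta> \<circ> t(0 := l)) xs)"
    and a: "\<alpha> h = (\<Sum>l\<in>I. a l *s \<alpha> l)" and b: "\<beta> h = (\<Sum>l\<in>I. b l *s \<beta> l)"
    and \<zeta>1: "\<psi> (wedge d (\<alpha> \<circ> t(0 := j))) = (\<lambda>xs. \<zeta>1 * wedge d (\<beta> \<circ> t(0 := j)) xs)"
    and \<zeta>2: "\<psi> (wedge d (\<alpha> \<circ> t(0 := h))) = (\<lambda>xs. \<zeta>2 * wedge d (\<beta> \<circ> t(0 := h)) xs)"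
  shows "\<zeta>1 * a j = \<zeta>2 * b j"
proof -
  let ?L = "I - t ` {1..<d}"
  obtain Z where "\<forall>l\<in>?L. \<psi> (wedge d (\<alpha> \<circ> t(0 := l))) = (\<lambda>xs. Z l * wedge d (\<beta> \<circ> t(0 := l)) xs)"
    using bchoice[OF scalar] by blast
  then have Z: "\<psi> (wedge d (\<alpha> \<circ> t(0 := l))) = (\<lambda>xs. (Z(j := \<zeta>1)) l * wedge d (\<beta> \<circ> t(0 := l)) xs)"
    if "l \<in> ?L" for l
    using that \<zeta>1 by (cases "l = j") auto
  have "(\<lambda>xs. \<Sum>l\<in>?L. (a l * (Z(j := \<zeta>1)) l) * wedge d (\<beta> \<circ> t(0 := l)) xs)
      = (\<lambda>xs. \<Sum>l\<in>?L. a l * \<psi> (wedge d (\<alpha> \<circ> t(0 := l))) xs)"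
    using Z by (intro ext sum.cong refl) (simp del: fun_upd_apply)
  also have "\<dots> = \<psi> (\<lambda>xs. \<Sum>l\<in>?L. a l * wedge d (\<alpha> \<circ> t(0 := l)) xs)"
    using \<open>finite I\<close> by (simp add: ext_iso_sum[OF iso])
  also have "\<dots> = (\<lambda>xs. \<zeta>2 * wedge d (\<beta> \<circ> t(0 := h)) xs)"
    using \<zeta>2 a wedge_comp_update_sum[OF \<open>1 \<le> d\<close> \<open>finite I\<close>, where w = \<alpha> and u = t and a = a] by (simp add: fun_upd_comp)
  also have "\<dots> = (\<lambda>xs. \<Sum>l\<in>?L. (\<zeta>2 * b l) * wedge d (\<beta> \<circ> t(0 := l)) xs)"
    using b wedge_comp_update_sum[OF \<open>1 \<le> d\<close> \<open>finite I\<close>, where w = \<beta> and u = t and a = b]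
    by (simp add: fun_upd_comp sum_distrib_left mult.assoc)
  finally have "a j * (Z(j := \<zeta>1)) j = \<zeta>2 * b j"
    by (rule wedge_update_coeff_eq[OF \<beta> \<open>finite I\<close> \<open>1 \<le> d\<close> t j])
  then show ?thesis by (simp add: mult.commute)
qed

theorem lemma5p17:
  fixes W :: "('w, 'b) monoid_scheme"
    and s :: "nat \<Rightarrow> 'w" and k :: nat
    and \<rho>1 \<rho>2 :: "'w \<Rightarrow> 'a::field_char_0 ^'n^'n"
    and \<alpha> \<beta> :: "nat \<Rightarrow> 'a ^'n"
    and d :: nat
    and \<psi> :: "('n list \<Rightarrow> 'a) \<Rightarrow> ('n list \<Rightarrow> 'a)"
    and I :: "nat set" and h j :: nat
    and a b :: "nat \<Rightarrow> 'a"
    and t :: "nat \<Rightarrow> nat"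
  assumes grp: "group W"
    and S_gen: "s ` {1..k} \<subseteq> carrier W" "generate W (s ` {1..k}) = carrier W"
    and rep1: "reflection_rep W s k \<rho>1" and irr1: "irreducible_rep W \<rho>1"
    and rep2: "reflection_rep W s k \<rho>2" and irr2: "irreducible_rep W \<rho>2"
    and alpha: "\<forall>i\<in>{1..k}. reflection_vector (\<rho>1 (s i)) (\<alpha> i)"
    and beta: "\<forall>i\<in>{1..k}. reflection_vector (\<rho>2 (s i)) (\<beta> i)"
    and d_bounds: "1 \<le> d" "d \<le> CARD('n) - 1"
    and psi_iso: "ext_iso W d \<rho>1 \<rho>2 \<psi>"
    and psi_wedge: "\<forall>l::nat \<Rightarrow> nat. l ` {..<d} \<subseteq> {1..k} \<and> lin_indep_fam d (\<alpha> \<circ> l) \<longrightarrow>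
         lin_indep_fam d (\<beta> \<circ> l) \<and>
         (\<exists>\<zeta>. \<zeta> \<noteq> 0 \<and> \<psi> (wedge d (\<alpha> \<circ> l)) = (\<lambda>xs. \<zeta> * wedge d (\<beta> \<circ> l) xs))"
    and I_sub: "I \<subseteq> {1..k}"
    and I_basis: "inj_on \<alpha> I" "vec.independent (\<alpha> ` I)" "vec.span (\<alpha> ` I) = UNIV"
    and h_in: "h \<in> {1..k} - I" and j_in: "j \<in> I"
    and a_coeffs: "\<alpha> h = (\<Sum>l\<in>I. a l *s \<alpha> l)"
    and b_coeffs: "\<beta> h = (\<Sum>l\<in>I. b l *s \<beta> l)"
    and aj: "a j \<noteq> 0"
    and t_distinct: "inj_on t {1..<d}" and t_range: "t ` {1..<d} \<subseteq> I - {j}"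
  shows "\<forall>\<zeta>1 \<zeta>2.
           \<psi> (wedge d (\<alpha> \<circ> t(0 := j))) = (\<lambda>xs. \<zeta>1 * wedge d (\<beta> \<circ> t(0 := j)) xs) \<and>
           \<psi> (wedge d (\<alpha> \<circ> t(0 := h))) = (\<lambda>xs. \<zeta>2 * wedge d (\<beta> \<circ> t(0 := h)) xs)
           \<longrightarrow> \<zeta>1 * a j = \<zeta>2 * b j"
proof (intro allI impI, elim conjE)
  fix \<zeta>1 \<zeta>2
  assume \<zeta>1: "\<psi> (wedge d (\<alpha> \<circ> t(0 := j))) = (\<lambda>xs. \<zeta>1 * wedge d (\<beta> \<circ> t(0 := j)) xs)"
    and \<zeta>2: "\<psi> (wedge d (\<alpha> \<circ> t(0 := h))) = (\<lambda>xs. \<zeta>2 * wedge d (\<beta> \<circ> t(0 := h)) xs)"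
  have finI: "finite I" using I_sub finite_subset by blast
  have \<alpha>I: "fam_indep I \<alpha>" using I_basis finI fam_indep_iff by blast
  have "card (\<alpha> ` I) = CARD('n)"
    using vec.basis_card_eq_dim[of "\<alpha> ` I" UNIV] I_basis vec_dim_card by simp
  then have "d < card I" using d_bounds card_image[OF I_basis(1)] by simp
  have scalar: "\<exists>\<zeta>. \<zeta> \<noteq> 0 \<and> \<psi> (wedge d (\<alpha> \<circ> u(0 := l))) = (\<lambda>xs. \<zeta> * wedge d (\<beta> \<circ> u(0 := l)) xs)"
    if u: "inj_on u {1..<d}" "u ` {1..<d} \<subseteq> I" and l: "l \<in> I - u ` {1..<d}" for u l
  proof -
    have range: "(u(0 := l)) ` {..<d} \<subseteq> I" using image_update_zero_subset[OF u(2)] l by blast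
    then have "(u(0 := l)) ` {..<d} \<subseteq> {1..k}" using I_sub by blast
    moreover have "lin_indep_fam d (\<alpha> \<circ> u(0 := l))"
      using lin_indep_fam_comp[OF \<alpha>I finI inj_on_update_zero[OF u(1)] range] l by blast
    ultimately show ?thesis using psi_wedge[rule_format, of "u(0 := l)"] by blast
  qed
  have \<beta>I: "fam_indep I \<beta>"
    by (rule fam_indep_transfer[OF psi_iso \<alpha>I finI d_bounds(1) \<open>d < card I\<close> scalar])
  have tI: "t ` {1..<d} \<subseteq> I" and jL: "j \<in> I - t ` {1..<d}" using t_range j_in by auto
  \<comment> \<open>\<open>a j \<noteq> 0\<close> only serves to make \<open>\<zeta>2\<close> exist, and here both scalars are given.\<close>
  show "\<zeta>1 * a j = \<zeta>2 * b j"
    using scalar[OF t_distinct tI]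
    by (intro wedge_coeff_relation[OF psi_iso \<beta>I finI d_bounds(1) t_distinct tI jL _ a_coeffs
          b_coeffs \<zeta>1 \<zeta>2]) blast
qed

end
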